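(* Every almost unperforated Cu-semigroup satisfying (O5) is left-soft separative.
   Context: A Cu-semigroup is a positively ordered commutative monoid satisfying (O1)–(O4): increasing sequences have suprema; each element is the supremum of a $\ll$-increasing sequence; $\ll$ is compatible with addition; suprema of increasing sequences are additive. Here $x\ll y$ means whenever $y\le\sup_n z_n$ for increasing $(z_n)$, $x\le z_m$ for some $m$. (O5): if $x+y\le z$, $x'\ll x$, $y'\ll y$, then there is $c$ with $y'\ll c$ and $x'+c\le z\le x+c$. $\infty x=\sup_n nx$. $x$ is strongly soft if for every $x'\ll x$ there is $t$ with $x'+t\ll x$ and $x'\ll\infty t$; $S_{\mathrm{soft}}$ is the set of strongly soft elements. $S$ is almost unperforated if $(n+1)x\le ny$ for some $n\ge1$ implies $x\le y$. $S$ is left-soft separative if whenever $y,t\in S$, $x\in S_{\mathrm{soft}}$ satisfy $x+t\ll y+t$, $t\ll\infty x$ and $t\ll\infty y$, then $x\ll y$. *)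

theory Defs
  imports Main
begin

text \<open>A Cu-semigroup is modelled as a type of class ordered_comm_monoid_add
(partially ordered commutative monoid with translation-invariant order),
subject to positivity and axioms (O1)--(O4), stated below.\<close>

definition is_sup :: "(nat \<Rightarrow> 'a::order) \<Rightarrow> 'a \<Rightarrow> bool" where
  "is_sup z s \<longleftrightarrow> (\<forall>n. z n \<le> s) \<and> (\<forall>u. (\<forall>n. z n \<le> u) \<longrightarrow> s \<le> u)"

definition way_below :: "'a::order \<Rightarrow> 'a \<Rightarrow> bool" (infix "\<lless>" 50) where
  "x \<lless> y \<longleftrightarrow> (\<forall>z s. mono z \<longrightarrow> is_sup z s \<longrightarrow> y \<le> s \<longrightarrow> (\<exists>m. x \<le> z m))"

definition nmul :: "nat \<Rightarrow> 'a::comm_monoid_add \<Rightarrow> 'a" where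
  "nmul n x = (\<Sum>i<n. x)"

definition infty :: "'a::ordered_comm_monoid_add \<Rightarrow> 'a" where
  "infty x = (THE s. is_sup (\<lambda>n. nmul n x) s)"

definition cu_semigroup :: "'a::ordered_comm_monoid_add itself \<Rightarrow> bool" where
  "cu_semigroup _ \<longleftrightarrow>
     (\<forall>x::'a. 0 \<le> x) \<and>
     (\<forall>z::nat \<Rightarrow> 'a. mono z \<longrightarrow> (\<exists>s. is_sup z s)) \<and>
     (\<forall>x::'a. \<exists>z. (\<forall>n. z n \<lless> z (Suc n)) \<and> is_sup z x) \<and>
     (\<forall>x' x y' y :: 'a. x' \<lless> x \<longrightarrow> y' \<lless> y \<longrightarrow> x' + y' \<lless> x + y) \<and>
     (\<forall>(z::nat \<Rightarrow> 'a) w s t. mono z \<longrightarrow> mono w \<longrightarrow> is_sup z s \<longrightarrow> is_sup w t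
          \<longrightarrow> is_sup (\<lambda>n. z n + w n) (s + t))"

definition O5 :: "'a::ordered_comm_monoid_add itself \<Rightarrow> bool" where
  "O5 _ \<longleftrightarrow> (\<forall>x y z x' y' :: 'a. x + y \<le> z \<longrightarrow> x' \<lless> x \<longrightarrow> y' \<lless> y \<longrightarrow>
      (\<exists>c. y' \<lless> c \<and> x' + c \<le> z \<and> z \<le> x + c))"

definition strongly_soft :: "'a::ordered_comm_monoid_add \<Rightarrow> bool" where
  "strongly_soft x \<longleftrightarrow> (\<forall>x'. x' \<lless> x \<longrightarrow> (\<exists>t. x' + t \<lless> x \<and> x' \<lless> infty t))"

definition almost_unperforated :: "'a::ordered_comm_monoid_add itself \<Rightarrow> bool" where
  "almost_unperforated _ \<longleftrightarrow>
     (\<forall>x y :: 'a. (\<exists>n\<ge>1. nmul (n + 1) x \<le> nmul n y) \<longrightarrow> x \<le> y)"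

definition left_soft_separative :: "'a::ordered_comm_monoid_add itself \<Rightarrow> bool" where
  "left_soft_separative _ \<longleftrightarrow>
     (\<forall>x y t :: 'a. strongly_soft x \<longrightarrow> x + t \<lless> y + t \<longrightarrow> t \<lless> infty x \<longrightarrow> t \<lless> infty y
        \<longrightarrow> x \<lless> y)"

end

theory Submission
  imports Defs
begin

text \<open>Approximate \<open>y\<close> from below by some \<open>y' \<lless> y\<close> with \<open>x + t \<le> y' + t\<close> and \<open>t \<le> K y'\<close>.
For \<open>x' \<lless> x\<close>, strong softness yields \<open>s\<close> with \<open>x' + s \<le> x\<close> and \<open>x' \<le> M s\<close>; hence, with
\<open>n = M (K + 1)\<close>,
  \<open>(n + K + 1) x' \<le> n x' + n s \<le> n x + t \<le> n y' + t \<le> (n + K) y'\<close>,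
so \<open>x' \<le> y'\<close> by almost unperforation.  Taking the supremum over \<open>x' \<lless> x\<close> gives
\<open>x \<le> y' \<lless> y\<close>.\<close>

lemma way_below_imp_le: "(x::'a::order) \<lless> y \<Longrightarrow> x \<le> y"
proof -
  assume "x \<lless> y"
  moreover have "mono (\<lambda>_::nat. y)" by (simp add: mono_def)
  moreover have "is_sup (\<lambda>_::nat. y) y" by (simp add: is_sup_def)
  ultimately show ?thesis unfolding way_below_def by blast
qed

lemma way_below_le_trans: "(a::'a::order) \<lless> b \<Longrightarrow> b \<le> c \<Longrightarrow> a \<lless> c"
  unfolding way_below_def by (meson order_trans)

lemma le_way_below_trans: "(a::'a::order) \<le> b \<Longrightarrow> b \<lless> c \<Longrightarrow> a \<lless> c"
  unfolding way_below_def by (meson order_trans)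

lemma is_sup_unique: "is_sup z s \<Longrightarrow> is_sup z s' \<Longrightarrow> s = s'"
  unfolding is_sup_def by (meson antisym)

lemma is_sup_upper: "is_sup z s \<Longrightarrow> z n \<le> s"
  unfolding is_sup_def by blast

lemma is_sup_least: "is_sup z s \<Longrightarrow> (\<And>n. z n \<le> u) \<Longrightarrow> s \<le> u"
  unfolding is_sup_def by blast

lemma rapidly_increasing_seq_way_below:
  "(\<And>n. z n \<lless> z (Suc n)) \<Longrightarrow> is_sup z x \<Longrightarrow> z n \<lless> (x::'a::order)"
  by (blast intro: way_below_le_trans is_sup_upper)

lemma nmul_0 [simp]: "nmul 0 x = 0"
  by (simp add: nmul_def)

lemma nmul_Suc: "nmul (Suc n) x = x + nmul n x"
  by (simp add: nmul_def add.commute)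

lemma nmul_add: "nmul (a + b) x = nmul a x + nmul b x"
  by (induct a) (simp_all add: nmul_Suc add.assoc)

lemma nmul_zero [simp]: "nmul n 0 = 0"
  by (simp add: nmul_def)

lemma nmul_mult: "nmul (a * b) x = nmul a (nmul b x)"
  by (induct a) (simp_all add: nmul_Suc nmul_add)

lemma nmul_add_distrib: "nmul n (x + y) = nmul n x + nmul n (y::'a::comm_monoid_add)"
  by (induct n) (simp_all add: nmul_Suc ac_simps)

lemma nmul_mono: "(x::'a::ordered_comm_monoid_add) \<le> y \<Longrightarrow> nmul n x \<le> nmul n y"
  by (induct n) (simp_all add: nmul_Suc add_mono)

lemma nmul_mono_left:
  assumes "0 \<le> (x::'a::ordered_comm_monoid_add)" and "a \<le> b"
  shows "nmul a x \<le> nmul b x"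
proof -
  have "nmul a x + 0 \<le> nmul a x + nmul (b - a) x"
    using nmul_mono[OF assms(1)] by (intro add_left_mono) simp
  with \<open>a \<le> b\<close> show ?thesis by (simp flip: nmul_add)
qed

lemma nmul_le_nmul_add_right:
  "(x::'a::ordered_comm_monoid_add) + t \<le> y + t \<Longrightarrow> nmul n x + t \<le> nmul n y + t"
proof (induct n)
  case (Suc n)
  have "nmul (Suc n) x + t = x + (nmul n x + t)" by (simp add: nmul_Suc ac_simps)
  also have "\<dots> \<le> x + (nmul n y + t)" using Suc by (simp add: add_left_mono)
  also have "\<dots> = nmul n y + (x + t)" by (simp add: ac_simps)
  also have "\<dots> \<le> nmul n y + (y + t)" using Suc(2) by (rule add_left_mono)
  also have "\<dots> = nmul (Suc n) y + t" by (simp add: nmul_Suc ac_simps)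
  finally show ?case .
qed simp

lemma almost_unperforated_le_of_soft_comparison:
  fixes x x' s t y' :: "'a::ordered_comm_monoid_add"
  assumes au: "almost_unperforated TYPE('a)" and "0 \<le> t"
    and xs: "x' + s \<le> x" and "M \<ge> 1" and x'M: "x' \<le> nmul M s"
    and xt: "x + t \<le> y' + t" and tK: "t \<le> nmul K y'"
  shows "x' \<le> y'"
proof -
  define n where "n = M * (K + 1)"
  have "nmul (K + 1) x' \<le> nmul (K + 1) (nmul M s)"
    using x'M by (rule nmul_mono)
  also have "\<dots> = nmul n s"
    by (simp add: n_def mult.commute flip: nmul_mult)
  finally have "nmul n x' + nmul (K + 1) x' \<le> nmul n x' + nmul n s"
    by (rule add_left_mono)
  then have "nmul ((n + K) + 1) x' \<le> nmul n x' + nmul n s"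
    by (simp add: ac_simps flip: nmul_add)
  also have "\<dots> \<le> nmul n x"
    using nmul_mono[OF xs] by (simp add: nmul_add_distrib)
  also have "\<dots> \<le> nmul n x + t"
    using add_left_mono[OF \<open>0 \<le> t\<close>] by simp
  also have "\<dots> \<le> nmul n y' + t"
    using xt by (rule nmul_le_nmul_add_right)
  also have "\<dots> \<le> nmul (n + K) y'"
    using add_left_mono[OF tK] by (simp add: nmul_add)
  finally have "nmul ((n + K) + 1) x' \<le> nmul (n + K) y'" .
  moreover have "n + K \<ge> 1" using \<open>M \<ge> 1\<close> by (simp add: n_def)
  ultimately show ?thesis
    using au unfolding almost_unperforated_def by blast
qed

context
  assumes cu: "cu_semigroup TYPE('a::ordered_comm_monoid_add)"
begin

lemma cu_nonneg: "0 \<le> (x::'a)"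
  using cu unfolding cu_semigroup_def by blast

lemma cu_sup_exists: "mono (z::nat \<Rightarrow> 'a) \<Longrightarrow> \<exists>s. is_sup z s"
  using cu unfolding cu_semigroup_def by blast

lemma cu_is_sup_add:
  "mono (z::nat \<Rightarrow> 'a) \<Longrightarrow> mono w \<Longrightarrow> is_sup z s \<Longrightarrow> is_sup w t \<Longrightarrow> is_sup (\<lambda>n. z n + w n) (s + t)"
  using cu unfolding cu_semigroup_def by blast

lemma cu_rapidly_increasing_seq:
  obtains z :: "nat \<Rightarrow> 'a" where "\<And>n. z n \<lless> z (Suc n)" "mono z" "is_sup z x"
proof -
  obtain z :: "nat \<Rightarrow> 'a" where z: "\<forall>n. z n \<lless> z (Suc n)" "is_sup z x"
    using cu unfolding cu_semigroup_def by blast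
  then have "mono z" unfolding mono_iff_le_Suc by (blast intro: way_below_imp_le)
  with z that show ?thesis by blast
qed

lemma cu_le_of_way_below_le: "(\<And>x'. x' \<lless> x \<Longrightarrow> x' \<le> y) \<Longrightarrow> (x::'a) \<le> y"
  by (rule cu_rapidly_increasing_seq[of x])
    (blast intro: is_sup_least rapidly_increasing_seq_way_below)

lemma mono_nmul: "mono (\<lambda>n. nmul n (x::'a))"
  by (auto simp: mono_def intro: nmul_mono_left cu_nonneg)

lemma cu_is_sup_infty: "is_sup (\<lambda>n. nmul n x) (infty (x::'a))"
proof -
  obtain s where s: "is_sup (\<lambda>n. nmul n x) s"
    using cu_sup_exists mono_nmul by blast
  then have "infty x = s"
    unfolding infty_def by (blast intro: the_equality is_sup_unique)
  with s show ?thesis by simp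
qed

lemma way_below_infty_imp_le_nmul:
  assumes "a \<lless> infty (x::'a)"
  obtains M where "M \<ge> 1" "a \<le> nmul M x"
proof -
  obtain m where "a \<le> nmul m x"
    using assms mono_nmul cu_is_sup_infty unfolding way_below_def by blast
  moreover have "nmul m x \<le> nmul (Suc m) x"
    by (intro nmul_mono_left cu_nonneg) simp
  ultimately show ?thesis using that[of "Suc m"] by auto
qed

lemma cu_is_sup_nmul:
  assumes "mono z" "is_sup z (s::'a)"
  shows "is_sup (\<lambda>n. nmul k (z n)) (nmul k s)"
proof (induct k)
  case (Suc k)
  have "mono (\<lambda>n. nmul k (z n))"
    using \<open>mono z\<close> by (auto simp: mono_def intro!: nmul_mono)
  then show ?case
    using cu_is_sup_add[OF \<open>mono z\<close> _ \<open>is_sup z s\<close> Suc] by (simp add: nmul_Suc)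
qed (simp add: is_sup_def)

text \<open>The diagonal \<open>n z\<^sub>n\<close> has supremum \<open>\<infinity> y\<close>, so anything way below \<open>\<infinity> y\<close> is
dominated by a multiple of a single term \<open>z\<^sub>b\<close>.\<close>

lemma way_below_infty_imp_le_nmul_approx:
  assumes "mono z" "is_sup z y" "t \<lless> infty (y::'a)"
  obtains b where "t \<le> nmul b (z b)"
proof -
  define w where "w n = nmul n (z n)" for n
  have mono_w: "mono w"
  proof (rule monoI)
    fix n n' :: nat assume "n \<le> n'"
    then have "nmul n (z n) \<le> nmul n (z n')"
      using \<open>mono z\<close> by (auto simp: mono_def intro!: nmul_mono)
    also have "\<dots> \<le> nmul n' (z n')"
      using \<open>n \<le> n'\<close> by (intro nmul_mono_left cu_nonneg)
    finally show "w n \<le> w n'" by (simp add: w_def)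
  qed
  then obtain s where s: "is_sup w s" using cu_sup_exists by blast
  have "nmul k (z n) \<le> s" for k n
  proof -
    have "nmul k (z n) \<le> nmul k (z (max k n))"
      using \<open>mono z\<close> by (auto simp: mono_def intro!: nmul_mono)
    also have "\<dots> \<le> w (max k n)"
      unfolding w_def by (intro nmul_mono_left cu_nonneg) simp
    also have "\<dots> \<le> s" using s by (rule is_sup_upper)
    finally show ?thesis .
  qed
  then have "nmul k y \<le> s" for k
    using cu_is_sup_nmul[OF assms(1,2), of k] by (blast intro: is_sup_least)
  then have "infty y \<le> s"
    using cu_is_sup_infty by (blast intro: is_sup_least)
  then obtain b where "t \<le> w b"
    using assms(3) mono_w s unfolding way_below_def by blast
  with that show ?thesis by (simp add: w_def)
qed

lemma cu_way_below_approx: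
  assumes xt: "x + t \<lless> y + t" and ty: "t \<lless> infty (y::'a)"
  obtains y' K where "y' \<lless> y" "x + t \<le> y' + t" "t \<le> nmul K y'"
proof -
  obtain z where z: "\<And>n. z n \<lless> z (Suc n)" "mono z" "is_sup z y"
    by (rule cu_rapidly_increasing_seq[where x = y]) blast
  obtain u where u: "\<And>n. u n \<lless> u (Suc n)" "mono u" "is_sup u t"
    by (rule cu_rapidly_increasing_seq[where x = t]) blast
  have "mono (\<lambda>n. z n + u n)"
    using z(2) u(2) by (simp add: mono_def add_mono)
  then obtain a where "x + t \<le> z a + u a"
    using xt cu_is_sup_add[OF z(2) u(2) z(3) u(3)] unfolding way_below_def by blast
  also have "\<dots> \<le> z a + t"
    using u(3) by (intro add_left_mono is_sup_upper)
  finally have a: "x + t \<le> z a + t" .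
  obtain b where b: "t \<le> nmul b (z b)"
    using way_below_infty_imp_le_nmul_approx[OF z(2,3) ty] .
  define m where "m = max a b"
  show ?thesis
  proof (rule that)
    show "z m \<lless> y" using z(1,3) by (rule rapidly_increasing_seq_way_below)
    have "z a \<le> z m" using z(2) by (simp add: m_def monoD)
    then show "x + t \<le> z m + t" using a by (blast intro: order_trans add_right_mono)
    have "z b \<le> z m" using z(2) by (simp add: m_def monoD)
    then show "t \<le> nmul b (z m)" using b by (blast intro: order_trans nmul_mono)
  qed
qed

end

theorem lemma4p7:
  assumes "cu_semigroup TYPE('a::ordered_comm_monoid_add)"
    and "O5 TYPE('a)"
    and "almost_unperforated TYPE('a)"
  shows "left_soft_separative TYPE('a)"
  unfolding left_soft_separative_def
proof (intro allI impI)
  fix x y t :: 'a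
  assume soft: "strongly_soft x" and "x + t \<lless> y + t" and "t \<lless> infty y"
  then obtain y' K where y': "y' \<lless> y" "x + t \<le> y' + t" "t \<le> nmul K y'"
    using cu_way_below_approx[OF assms(1)] by blast
  have "x' \<le> y'" if "x' \<lless> x" for x'
  proof -
    obtain s where s: "x' + s \<lless> x" "x' \<lless> infty s"
      using soft \<open>x' \<lless> x\<close> unfolding strongly_soft_def by blast
    obtain M where "M \<ge> 1" "x' \<le> nmul M s"
      using way_below_infty_imp_le_nmul[OF assms(1) s(2)] .
    with s(1) y'(2,3) show ?thesis
      by (blast intro: almost_unperforated_le_of_soft_comparison[OF assms(3)]
          cu_nonneg[OF assms(1)] way_below_imp_le)
  qed
  then have "x \<le> y'" by (rule cu_le_of_way_below_le[OF assms(1)])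
  then show "x \<lless> y" using y'(1) by (rule le_way_below_trans)
qed

end
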